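(* Assume the missing-at-random setting below. Then: (i) for every $1\le k\le n_{\mathcal S1}$ and $c\in\mathbb R$, $\mathbb P(p_{\texttt t,k,c,\mathcal S}\le\alpha\text{ and }H^{\texttt{to}}_{k,c}\text{ holds})\le\alpha$ for all $\alpha\in(0,1)$, where $H^{\texttt{to}}_{k,c}:\sum_{i\in\mathcal S}Z_i\mathbf 1\{\tau_i>c\}\le n_{\mathcal S1}-k$ (equivalently $\tau_{\texttt{to}(k)}\le c$); (ii) for every $1\le k\le n_{\mathcal S1}$, $\mathcal I^\alpha_{\texttt{to},k}:=\{c\in\mathbb R:p_{\texttt t,k,c,\mathcal S}>\alpha\}$ satisfies $\mathbb P(\tau_{\texttt{to}(k)}\in\mathcal I^\alpha_{\texttt{to},k})\ge1-\alpha$ and is a one-sided interval of the form $[\hat\tau_{\texttt{to}(k)},\infty)$ or $(\hat\tau_{\texttt{to}(k)},\infty)$ with $\hat\tau_{\texttt{to}(k)}=\inf\mathcal I^\alpha_{\texttt{to},k}$; (iii) $\mathbb P(\tau_{\texttt{to}(k)}\in\mathcal I^\alpha_{\texttt{to},k}\text{ for all }1\le k\le n_{\mathcal S1})\ge1-\alpha$.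
   Context: There are $n$ units with fixed potential outcomes $Y_i^\star(0),Y_i^\star(1)\in\mathbb R$; $\tau_i=Y_i^\star(1)-Y_i^\star(0)$. Missing at random: the pairs $(M_i(1),M_i(0))\in\{0,1\}^2$ are random, i.i.d. over $i$, with $\mathbb P((M_i(1),M_i(0))=(m,m'))=p_{mm'}$ for constants $p_{11},p_{10},p_{01},p_{00}$ summing to 1 not depending on the potential outcomes. $\boldsymbol Z\in\{0,1\}^n$ is uniform over vectors with exactly $n_1$ ones ($n_1,n_0\ge1$ fixed, $n_1+n_0=n$), independent of the potential outcomes and potential missingness. $M_i=Z_iM_i(1)+(1-Z_i)M_i(0)$; the realized outcome $Z_iY_i^\star(1)+(1-Z_i)Y_i^\star(0)$ is observed, denoted $Y_i$, iff $M_i=1$. $\mathcal S=\{i:M_i=1\}$, $n_{\mathcal S1}=\sum_{i\in\mathcal S}Z_i$, $n_{\mathcal S0}=|\mathcal S|-n_{\mathcal S1}$; $\tau_{\texttt{to}(1)}\le\dots\le\tau_{\texttt{to}(n_{\mathcal S1})}$ are the sorted $\tau_i$ over $i\in\mathcal S$ with $Z_i=1$. Statistics: $\overline{\mathbb R}=\mathbb R\cup\{\pm\infty\}$; $\psi_{i,j}(y,y')=\mathbf 1\{y>y'\}+\mathbf 1\{y=y'\}\mathbf 1\{i\ge j\}$; $\mathrm{rank}_i(\boldsymbol y)=\sum_j\psi_{i,j}(y_i,y_j)$; $\phi$ nondecreasing real function on nonnegative integers; $t_{\mathrm R,\phi}(\boldsymbol z,\boldsymbol y)$ is either $\sum_iz_i\phi(\mathrm{rank}_i(\boldsymbol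 y))$ or $\sum_iz_i\phi(\sum_j(1-z_j)\psi_{i,j}(y_i,y_j))$ (either choice). $t_{\mathrm R,\phi,\mathcal S}(\boldsymbol z,\boldsymbol y)=t_{\mathrm R,\phi}(\boldsymbol z_{\mathcal S},\boldsymbol y_{\mathcal S})$ (subvectors indexed by $\mathcal S$, original order); $G_{\mathrm R,\phi,\mathcal S}(c)=\mathbb P(t_{\mathrm R,\phi,\mathcal S}(\boldsymbol A,\boldsymbol y_0)\ge c)$ with $\boldsymbol A_{\mathcal S}$ uniform over assignments of $\mathcal S$ with exactly $n_{\mathcal S1}$ treated ($\mathcal S,n_{\mathcal S1}$ held fixed) and $\boldsymbol y_0\in\mathbb R^n$ fixed. p-value: write $\{i:Z_i=M_i=1\}=\{j_1,\dots,j_{n_{\mathcal S1}}\}$ with $\psi_{j_{l+1},j_l}(Y_{j_{l+1}},Y_{j_l})=1$; $\mathcal J_L=\{j_{n_{\mathcal S1}-L+1},\dots,j_{n_{\mathcal S1}}\}$ for $L\ge1$, $\mathcal J_0=\emptyset$. Let $\boldsymbol v\in\overline{\mathbb R}^n$ with $v_i=-\infty$ for $i\in\mathcal J_{n_{\mathcal S1}-k}$ and $v_i=Y_i-cZ_i$ for other $i\in\mathcal S$. Then $p_{\texttt t,k,c,\mathcal S}=G_{\mathrm R,\phi,\mathcal S}(t_{\mathrm R,\phi,\mathcal S}(\boldsymbol Z,\boldsymbol v))$. *)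

theory Defs
  imports Complex_Main "HOL-Library.Extended_Real"
begin

(* Units are indexed by 0..<n.  A treatment assignment Z is represented by the set T of
   treated units; potential missingness (M_i(1), M_i(0)) by the sets M1 = {i. M_i(1)=1}
   and M0 = {i. M_i(0)=1}. *)

definition psi :: "nat \<Rightarrow> nat \<Rightarrow> ereal \<Rightarrow> ereal \<Rightarrow> nat" where
  "psi i j y y' = (if y > y' \<or> (y = y' \<and> j \<le> i) then 1 else 0)"

(* t_{R,phi,S}(z,y): statistic on the subvectors indexed by S (original order kept, so the
   tie-breaking by position coincides with tie-breaking by original index); A = treated
   units (z_i = 1).  The flag b selects between the two allowed choices of t_{R,phi}. *)
definition rank_stat :: "bool \<Rightarrow> (nat \<Rightarrow> real) \<Rightarrow> nat set \<Rightarrow> nat set \<Rightarrow> (nat \<Rightarrow> ereal) \<Rightarrow> real" where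
  "rank_stat b \<phi> S A y =
     (\<Sum>i\<in>S \<inter> A. \<phi> (if b then (\<Sum>j\<in>S. psi i j (y i) (y j))
                         else (\<Sum>j\<in>S - A. psi i j (y i) (y j))))"

definition G_fun :: "bool \<Rightarrow> (nat \<Rightarrow> real) \<Rightarrow> nat set \<Rightarrow> nat \<Rightarrow> (nat \<Rightarrow> real) \<Rightarrow> real \<Rightarrow> real" where
  "G_fun b \<phi> S m y0 c =
     real (card {A. A \<subseteq> S \<and> card A = m \<and> c \<le> rank_stat b \<phi> S A (\<lambda>i. ereal (y0 i))})
     / real (card {A. A \<subseteq> S \<and> card A = m})"

definition obs :: "nat \<Rightarrow> nat set \<Rightarrow> nat set \<Rightarrow> nat set \<Rightarrow> nat set" where
  "obs n T M1 M0 = {i \<in> {..<n}. (if i \<in> T then i \<in> M1 else i \<in> M0)}"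

definition yobs :: "(nat \<Rightarrow> real) \<Rightarrow> (nat \<Rightarrow> real) \<Rightarrow> nat set \<Rightarrow> nat \<Rightarrow> real" where
  "yobs Y1 Y0 T i = (if i \<in> T then Y1 i else Y0 i)"

definition nS1 :: "nat \<Rightarrow> nat set \<Rightarrow> nat set \<Rightarrow> nat set \<Rightarrow> nat" where
  "nS1 n T M1 M0 = card (obs n T M1 M0 \<inter> T)"

(* J_{n_{S1}-k}: the treated observed units j_l with l > k, where j_l is the unit whose
   position in the psi-ordering of treated observed units is l, i.e.
   l = #{j treated observed : psi_{j_l,j}(Y_{j_l},Y_j) = 1}. *)
definition Jset :: "nat \<Rightarrow> (nat \<Rightarrow> real) \<Rightarrow> (nat \<Rightarrow> real) \<Rightarrow> nat set \<Rightarrow> nat set \<Rightarrow> nat set \<Rightarrow> nat \<Rightarrow> nat set" where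
  "Jset n Y1 Y0 T M1 M0 k =
     {i \<in> obs n T M1 M0 \<inter> T.
        k < card {j \<in> obs n T M1 M0 \<inter> T.
                    psi i j (ereal (yobs Y1 Y0 T i)) (ereal (yobs Y1 Y0 T j)) = 1}}"

definition vvec :: "nat \<Rightarrow> (nat \<Rightarrow> real) \<Rightarrow> (nat \<Rightarrow> real) \<Rightarrow> nat set \<Rightarrow> nat set \<Rightarrow> nat set \<Rightarrow> nat \<Rightarrow> real \<Rightarrow> nat \<Rightarrow> ereal" where
  "vvec n Y1 Y0 T M1 M0 k c i =
     (if i \<in> Jset n Y1 Y0 T M1 M0 k then -\<infinity>
      else ereal (yobs Y1 Y0 T i - c * (if i \<in> T then 1 else 0)))"

definition pval :: "bool \<Rightarrow> (nat \<Rightarrow> real) \<Rightarrow> (nat \<Rightarrow> real) \<Rightarrow> nat \<Rightarrow> (nat \<Rightarrow> real) \<Rightarrow> (nat \<Rightarrow> real)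
    \<Rightarrow> nat set \<Rightarrow> nat set \<Rightarrow> nat set \<Rightarrow> nat \<Rightarrow> real \<Rightarrow> real" where
  "pval b \<phi> y0 n Y1 Y0 T M1 M0 k c =
     G_fun b \<phi> (obs n T M1 M0) (nS1 n T M1 M0) y0
       (rank_stat b \<phi> (obs n T M1 M0) (T \<inter> obs n T M1 M0) (vvec n Y1 Y0 T M1 M0 k c))"

(* tau_{to(k)}: k-th smallest (1-based) of tau_i over treated observed units *)
definition tau_to :: "nat \<Rightarrow> (nat \<Rightarrow> real) \<Rightarrow> (nat \<Rightarrow> real) \<Rightarrow> nat set \<Rightarrow> nat set \<Rightarrow> nat set \<Rightarrow> nat \<Rightarrow> real" where
  "tau_to n Y1 Y0 T M1 M0 k =
     sort (map (\<lambda>i. Y1 i - Y0 i) (sorted_list_of_set (obs n T M1 M0 \<inter> T))) ! (k - 1)"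

definition Hto :: "nat \<Rightarrow> (nat \<Rightarrow> real) \<Rightarrow> (nat \<Rightarrow> real) \<Rightarrow> nat set \<Rightarrow> nat set \<Rightarrow> nat set \<Rightarrow> nat \<Rightarrow> real \<Rightarrow> bool" where
  "Hto n Y1 Y0 T M1 M0 k c \<longleftrightarrow>
     card {i \<in> obs n T M1 M0 \<inter> T. Y1 i - Y0 i > c} \<le> nS1 n T M1 M0 - k"

definition CI :: "bool \<Rightarrow> (nat \<Rightarrow> real) \<Rightarrow> (nat \<Rightarrow> real) \<Rightarrow> nat \<Rightarrow> (nat \<Rightarrow> real) \<Rightarrow> (nat \<Rightarrow> real)
    \<Rightarrow> real \<Rightarrow> nat set \<Rightarrow> nat set \<Rightarrow> nat set \<Rightarrow> nat \<Rightarrow> real set" where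
  "CI b \<phi> y0 n Y1 Y0 \<alpha> T M1 M0 k = {c. pval b \<phi> y0 n Y1 Y0 T M1 M0 k c > \<alpha>}"

(* Probability of an event E(T, M1, M0): T uniform over n1-subsets of {..<n}, independent
   of the pairs (M_i(1), M_i(0)), which are i.i.d. with P((M_i(1),M_i(0)) = (m,m')) = p m m'. *)
definition prob_ev :: "nat \<Rightarrow> nat \<Rightarrow> (bool \<Rightarrow> bool \<Rightarrow> real) \<Rightarrow> (nat set \<Rightarrow> nat set \<Rightarrow> nat set \<Rightarrow> bool) \<Rightarrow> real" where
  "prob_ev n n1 p E =
     (\<Sum>T\<in>{T. T \<subseteq> {..<n} \<and> card T = n1}. \<Sum>M1\<in>Pow {..<n}. \<Sum>M0\<in>Pow {..<n}.
        if E T M1 M0 then (\<Prod>i<n. p (i \<in> M1) (i \<in> M0)) / real (n choose n1) else 0)"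

end

theory Submission
  imports Defs "HOL-Library.Product_Lexorder" "HOL-Combinatorics.Permutations"
begin

text \<open>Consider the oracle p-value of the rank statistic evaluated at the control outcomes
  \<open>Y(0)\<close>. Conditionally on the observed set \<open>S\<close> and on \<open>n\<^sub>S\<^sub>1\<close>, missingness at random
  makes the observed treated set uniform among the subsets of \<open>S\<close> of size \<open>n\<^sub>S\<^sub>1\<close>, so
  the oracle p-value is at most \<open>\<alpha>\<close> with probability at most \<open>\<alpha>\<close>.
  Under \<open>H\<^sub>k\<^sub>,\<^sub>c\<close> at most \<open>n\<^sub>S\<^sub>1 - k\<close> treated units have \<open>\<tau>\<^sub>i > c\<close>. Sending the
  \<open>n\<^sub>S\<^sub>1 - k\<close> largest treated outcomes to \<open>-\<infinity>\<close> absorbs these units, and every other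
  treated unit has \<open>Y\<^sub>i - c \<le> Y\<^sub>i(0)\<close>; hence the treated values of \<open>v\<close> are stochastically
  smaller than the control outcomes and, \<open>\<phi>\<close> being monotone, \<open>t(Z, v) \<le> t(Z, Y(0))\<close>. The
  null distribution of a rank statistic does not depend on the outcomes, so
  \<open>p\<^sub>t\<^sub>,\<^sub>k\<^sub>,\<^sub>c \<le> \<alpha>\<close> forces the oracle p-value below \<open>\<alpha>\<close>, which gives (i).
  Since \<open>H\<^sub>k\<^sub>,\<^sub>c\<close> holds at \<open>c = \<tau>\<^sub>t\<^sub>o\<^sub>(\<^sub>k\<^sub>)\<close> for every \<open>k\<close>, any \<open>\<tau>\<^sub>t\<^sub>o\<^sub>(\<^sub>k\<^sub>)\<close>
  outside its interval again forces the oracle p-value below \<open>\<alpha>\<close>, which gives (ii) and (iii);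
  the p-value is nondecreasing in \<open>c\<close>, so each confidence set is an upward ray.\<close>

section \<open>Rank statistics through injective keys\<close>

definition count_le :: "nat set \<Rightarrow> (nat \<Rightarrow> 'k::linorder) \<Rightarrow> 'k \<Rightarrow> nat" where
  "count_le A K x = card {j\<in>A. K j \<le> x}"

lemma count_le_mono:
  assumes "finite A" "x \<le> y"
  shows "count_le A K x \<le> count_le A K y"
  unfolding count_le_def using assms by (intro card_mono) auto

lemma le_of_count_le_le:
  assumes "finite A" "i \<in> A" "count_le A K (K i) \<le> count_le A K x"
  shows "K i \<le> x"
proof (rule ccontr)
  assume "\<not> K i \<le> x"
  then have "{j\<in>A. K j \<le> x} \<subset> {j\<in>A. K j \<le> K i}"
    using \<open>i \<in> A\<close> by auto
  then have "count_le A K x < count_le A K (K i)"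
    unfolding count_le_def using \<open>finite A\<close> by (intro psubset_card_mono) auto
  with assms(3) show False by simp
qed

lemma bij_betw_count_le:
  fixes K :: "nat \<Rightarrow> 'k::linorder"
  assumes "finite A" "inj_on K A"
  shows "bij_betw (\<lambda>i. count_le A K (K i)) A {1..card A}"
proof -
  let ?r = "\<lambda>i. count_le A K (K i)"
  have inj: "inj_on ?r A"
  proof (rule inj_onI)
    fix i j assume "i \<in> A" "j \<in> A" "?r i = ?r j"
    then have "K i = K j"
      using le_of_count_le_le[OF \<open>finite A\<close>] by (metis order.refl order.antisym)
    then show "i = j" using assms(2) \<open>i \<in> A\<close> \<open>j \<in> A\<close> by (meson inj_onD)
  qed
  have "?r ` A \<subseteq> {1..card A}"
  proof
    fix x assume "x \<in> ?r ` A"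
    then obtain i where i: "i \<in> A" "x = ?r i" by auto
    then have "i \<in> {j\<in>A. K j \<le> K i}" by simp
    then have "0 < x" unfolding i(2) count_le_def using \<open>finite A\<close> by (auto simp: card_gt_0_iff)
    moreover have "x \<le> card A" unfolding i(2) count_le_def using \<open>finite A\<close> by (intro card_mono) auto
    ultimately show "x \<in> {1..card A}" by simp
  qed
  moreover have "card (?r ` A) = card {1..card A}" using card_image[OF inj] by simp
  ultimately have "?r ` A = {1..card A}" by (intro card_subset_eq) auto
  with inj show ?thesis by (simp add: bij_betw_def)
qed

lemma count_le_le_iff:
  assumes "finite A" "i \<in> A"
  shows "count_le A K (K i) \<le> count_le A K (K j) \<longleftrightarrow> K i \<le> K j"
  using le_of_count_le_le[OF assms] count_le_mono[OF assms(1)] by blast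

lemma card_count_le_gt:
  fixes K :: "nat \<Rightarrow> 'k::linorder"
  assumes "finite A" "inj_on K A"
  shows "card {i\<in>A. k < count_le A K (K i)} = card A - k"
proof -
  let ?r = "\<lambda>i. count_le A K (K i)"
  have inj: "inj_on ?r A" and img: "?r ` A = {1..card A}"
    using bij_betw_count_le[OF assms] by (auto simp: bij_betw_def)
  have "card {i\<in>A. k < ?r i} = card (?r ` {i\<in>A. k < ?r i})"
    by (rule card_image[symmetric]) (rule inj_on_subset[OF inj], auto)
  also have "?r ` {i\<in>A. k < ?r i} = {x\<in>?r ` A. k < x}"
    by auto
  also have "\<dots> = {Suc k..card A}"
    unfolding img by auto
  finally show ?thesis by simp
qed

lemma rank_matching:
  fixes K K' :: "nat \<Rightarrow> 'k::linorder"
  assumes "finite A" "inj_on K A" "inj_on K' A"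
  obtains \<sigma> where "bij_betw \<sigma> A A"
    and "\<And>i. i \<in> A \<Longrightarrow> count_le A K (K (\<sigma> i)) = count_le A K' (K' i)"
proof
  let ?r = "\<lambda>L i. count_le A L (L i)"
  have bK: "bij_betw (?r K) A {1..card A}" and bK': "bij_betw (?r K') A {1..card A}"
    using bij_betw_count_le[OF \<open>finite A\<close>] assms(2,3) by blast+
  show "bij_betw (inv_into A (?r K) \<circ> ?r K') A A"
    using bK' bij_betw_inv_into[OF bK] by (rule bij_betw_trans)
  show "?r K ((inv_into A (?r K) \<circ> ?r K') i) = ?r K' i" if "i \<in> A" for i
  proof -
    have "?r K' i \<in> ?r K ` A"
      using that bij_betw_imp_surj_on[OF bK] bij_betw_imp_surj_on[OF bK'] by blast
    from f_inv_into_f[OF this] show ?thesis by simp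
  qed
qed

lemma count_le_Un_Diff:
  assumes "finite S" "A \<subseteq> S"
  shows "count_le S K x = count_le A K x + count_le (S - A) K x"
proof -
  have "{j\<in>S. K j \<le> x} = {j\<in>A. K j \<le> x} \<union> {j\<in>S - A. K j \<le> x}"
    using assms(2) by auto
  moreover have "finite A"
    using assms finite_subset by blast
  ultimately show ?thesis
    unfolding count_le_def using assms(1) by (simp add: card_Un_disjoint disjoint_iff)
qed

text \<open>Since \<^const>\<open>psi\<close> breaks ties by index, ranks count the keys \<open>(y j, j)\<close> below
  \<open>(y i, i)\<close> in the lexicographic order; these keys are injective.\<close>

definition key_stat :: "bool \<Rightarrow> (nat \<Rightarrow> real) \<Rightarrow> nat set \<Rightarrow> nat set \<Rightarrow> (nat \<Rightarrow> 'k::linorder) \<Rightarrow> real" where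
  "key_stat b \<phi> S A K =
     (\<Sum>i\<in>A. \<phi> (if b then count_le S K (K i) else count_le (S - A) K (K i)))"

lemma rank_stat_eq_key_stat:
  assumes "finite S"
  shows "rank_stat b \<phi> S A y = key_stat b \<phi> S (S \<inter> A) (\<lambda>i. (y i, i))"
proof -
  have sum_psi: "(\<Sum>j\<in>X. psi i j (y i) (y j)) = count_le X (\<lambda>i. (y i, i)) (y i, i)"
    if "X \<subseteq> S" for X i
    using finite_subset[OF that assms]
    by (auto simp: psi_def count_le_def sum.If_cases Int_def conj_commute intro!: arg_cong[where f = card])
  have "S - S \<inter> A = S - A" by auto
  then show ?thesis
    unfolding rank_stat_def key_stat_def by (simp only: sum_psi[OF subset_refl] sum_psi[OF Diff_subset])
qed

text \<open>Matching the \<open>r\<close>-th smallest treated key of \<^term>\<open>K\<close> with the \<open>r\<close>-th smallest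
  of \<^term>\<open>K'\<close> raises every treated key, hence every rank.\<close>

lemma key_stat_mono:
  fixes K K' :: "nat \<Rightarrow> 'k::linorder"
  assumes "finite S" "A \<subseteq> S" "mono \<phi>" "inj_on K A" "inj_on K' A"
    and controls: "\<And>i. i \<in> S - A \<Longrightarrow> K i = K' i"
    and dominated: "\<And>x. count_le A K' x \<le> count_le A K x"
  shows "key_stat b \<phi> S A K \<le> key_stat b \<phi> S A K'"
proof -
  have "finite A" using assms(1,2) finite_subset by blast
  obtain \<sigma> where \<sigma>: "bij_betw \<sigma> A A"
    and rank_\<sigma>: "\<And>i. i \<in> A \<Longrightarrow> count_le A K (K (\<sigma> i)) = count_le A K' (K' i)"
    using rank_matching[OF \<open>finite A\<close> assms(4,5)] by blast
  have key_\<sigma>: "K (\<sigma> i) \<le> K' i" if "i \<in> A" for i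
  proof (rule le_of_count_le_le[OF \<open>finite A\<close> bij_betw_apply[OF \<sigma> that]])
    show "count_le A K (K (\<sigma> i)) \<le> count_le A K (K' i)"
      using rank_\<sigma>[OF that] dominated[of "K' i"] by simp
  qed
  have controls_\<sigma>: "count_le (S - A) K (K (\<sigma> i)) \<le> count_le (S - A) K' (K' i)" if "i \<in> A" for i
    unfolding count_le_def using assms(1) controls key_\<sigma>[OF that]
    by (intro card_mono) (auto intro: order_trans)
  have "key_stat b \<phi> S A K = (\<Sum>i\<in>A. \<phi> (if b then count_le S K (K (\<sigma> i))
                                         else count_le (S - A) K (K (\<sigma> i))))"
    unfolding key_stat_def by (rule sum.reindex_bij_betw[OF \<sigma>, symmetric])
  also have "\<dots> \<le> key_stat b \<phi> S A K'"
    unfolding key_stat_def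
    by (intro sum_mono monoD[OF \<open>mono \<phi>\<close>])
       (simp add: count_le_Un_Diff[OF assms(1,2)] rank_\<sigma> controls_\<sigma> add_left_mono)
  finally show ?thesis .
qed

lemma key_stat_transport:
  fixes K K' :: "nat \<Rightarrow> 'k::linorder"
  assumes \<sigma>: "bij_betw \<sigma> S S" and "A \<subseteq> S"
    and order: "\<And>i j. i \<in> S \<Longrightarrow> j \<in> S \<Longrightarrow> K j \<le> K i \<longleftrightarrow> K' (\<sigma> j) \<le> K' (\<sigma> i)"
  shows "key_stat b \<phi> S A K = key_stat b \<phi> S (\<sigma> ` A) K'"
proof -
  have inj: "inj_on \<sigma> S" and img: "\<sigma> ` S = S"
    using \<sigma> by (auto simp: bij_betw_def)
  have count_image: "count_le (\<sigma> ` X) K' (K' (\<sigma> i)) = count_le X K (K i)"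
    if "i \<in> S" "X \<subseteq> S" for i X
  proof -
    have "{j\<in>X. K' (\<sigma> j) \<le> K' (\<sigma> i)} = {j\<in>X. K j \<le> K i}"
      using order[OF \<open>i \<in> S\<close>] \<open>X \<subseteq> S\<close> by blast
    then have "{j\<in>\<sigma> ` X. K' j \<le> K' (\<sigma> i)} = \<sigma> ` {j\<in>X. K j \<le> K i}"
      by blast
    moreover have "inj_on \<sigma> {j\<in>X. K j \<le> K i}"
      by (rule inj_on_subset[OF inj]) (use \<open>X \<subseteq> S\<close> in auto)
    ultimately show ?thesis
      unfolding count_le_def by (simp add: card_image)
  qed
  have compl: "S - \<sigma> ` A = \<sigma> ` (S - A)"
    using inj_on_image_set_diff[OF inj, of S A] \<open>A \<subseteq> S\<close> img by auto
  have "key_stat b \<phi> S (\<sigma> ` A) K' =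
      (\<Sum>i\<in>A. \<phi> (if b then count_le (\<sigma> ` S) K' (K' (\<sigma> i))
                 else count_le (\<sigma> ` (S - A)) K' (K' (\<sigma> i))))"
    unfolding key_stat_def img compl
    using inj_on_subset[OF inj \<open>A \<subseteq> S\<close>] by (simp add: sum.reindex)
  also have "\<dots> = key_stat b \<phi> S A K"
    unfolding key_stat_def using \<open>A \<subseteq> S\<close>
    by (intro sum.cong refl) (simp add: count_image subset_iff)
  finally show ?thesis by simp
qed

lemma card_subsets_transport:
  assumes \<sigma>: "bij_betw \<sigma> S S" and PQ: "\<And>A. A \<subseteq> S \<Longrightarrow> P A \<longleftrightarrow> Q (\<sigma> ` A)"
  shows "card {A. A \<subseteq> S \<and> card A = m \<and> P A} = card {A. A \<subseteq> S \<and> card A = m \<and> Q A}"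
proof -
  have inj: "inj_on (image \<sigma>) (Pow S)" and img: "image \<sigma> ` Pow S = Pow S"
    using bij_betw_image_Pow[OF \<sigma>] by (auto simp: bij_betw_def)
  have card_\<sigma>: "card (\<sigma> ` A) = card A" if "A \<subseteq> S" for A
    using \<sigma> that by (meson bij_betw_def card_image inj_on_subset)
  have "{A. A \<subseteq> S \<and> card A = m \<and> Q A} = image \<sigma> ` {A. A \<subseteq> S \<and> card A = m \<and> P A}"
  proof (intro equalityI subsetI)
    fix B assume B: "B \<in> {A. A \<subseteq> S \<and> card A = m \<and> Q A}"
    then have "B \<in> image \<sigma> ` Pow S"
      using img by simp
    then obtain A where "A \<subseteq> S" "B = \<sigma> ` A"
      by blast
    with B show "B \<in> image \<sigma> ` {A. A \<subseteq> S \<and> card A = m \<and> P A}"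
      using PQ card_\<sigma> by simp
  next
    fix B assume "B \<in> image \<sigma> ` {A. A \<subseteq> S \<and> card A = m \<and> P A}"
    then obtain A where "A \<subseteq> S" "card A = m" "P A" "B = \<sigma> ` A" by auto
    then show "B \<in> {A. A \<subseteq> S \<and> card A = m \<and> Q A}"
      using PQ card_\<sigma> bij_betwE[OF \<sigma>] by auto
  qed
  moreover have "inj_on (image \<sigma>) {A. A \<subseteq> S \<and> card A = m \<and> P A}"
    using inj by (rule inj_on_subset) auto
  ultimately show ?thesis
    by (simp add: card_image)
qed

section \<open>The randomization distribution of the rank statistic\<close>

lemma G_fun_indep:
  assumes "finite S"
  shows "G_fun b \<phi> S m y c = G_fun b \<phi> S m y' c"
proof -
  define K where "K i = (ereal (y i), i)" for i
  define K' where "K' i = (ereal (y' i), i)" for i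
  have "inj_on K S" "inj_on K' S"
    unfolding K_def K'_def by (auto simp: inj_on_def)
  then obtain \<sigma> where \<sigma>: "bij_betw \<sigma> S S"
    and rank_\<sigma>: "\<And>i. i \<in> S \<Longrightarrow> count_le S K' (K' (\<sigma> i)) = count_le S K (K i)"
    using rank_matching[OF assms] by blast
  have order: "K j \<le> K i \<longleftrightarrow> K' (\<sigma> j) \<le> K' (\<sigma> i)" if "i \<in> S" "j \<in> S" for i j
  proof -
    have "K j \<le> K i \<longleftrightarrow> count_le S K (K j) \<le> count_le S K (K i)"
      using count_le_le_iff[OF assms \<open>j \<in> S\<close>, where K = K and j = i] by simp
    also have "\<dots> \<longleftrightarrow> count_le S K' (K' (\<sigma> j)) \<le> count_le S K' (K' (\<sigma> i))"
      using rank_\<sigma> that by simp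
    also have "\<dots> \<longleftrightarrow> K' (\<sigma> j) \<le> K' (\<sigma> i)"
      using count_le_le_iff[OF assms bij_betw_apply[OF \<sigma> \<open>j \<in> S\<close>], where K = K' and j = "\<sigma> i"]
      by simp
    finally show ?thesis .
  qed
  have "card {A. A \<subseteq> S \<and> card A = m \<and> c \<le> rank_stat b \<phi> S A (\<lambda>i. ereal (y i))}
      = card {A. A \<subseteq> S \<and> card A = m \<and> c \<le> rank_stat b \<phi> S A (\<lambda>i. ereal (y' i))}"
  proof (rule card_subsets_transport[OF \<sigma>])
    fix A assume "A \<subseteq> S"
    then have "\<sigma> ` A \<subseteq> S"
      using bij_betw_imp_surj_on[OF \<sigma>] by blast
    then show "c \<le> rank_stat b \<phi> S A (\<lambda>i. ereal (y i)) \<longleftrightarrow>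
        c \<le> rank_stat b \<phi> S (\<sigma> ` A) (\<lambda>i. ereal (y' i))"
      using key_stat_transport[OF \<sigma> \<open>A \<subseteq> S\<close>, of K K' b \<phi>] order \<open>A \<subseteq> S\<close>
      unfolding rank_stat_eq_key_stat[OF assms] K_def K'_def by (simp add: Int_absorb1)
  qed
  then show ?thesis
    unfolding G_fun_def by simp
qed

lemma G_fun_antimono:
  assumes "finite S" "c \<le> c'"
  shows "G_fun b \<phi> S m y c' \<le> G_fun b \<phi> S m y c"
proof -
  have "finite {A. A \<subseteq> S \<and> card A = m \<and> c \<le> rank_stat b \<phi> S A (\<lambda>i. ereal (y i))}"
    using assms(1) by simp
  then have "card {A. A \<subseteq> S \<and> card A = m \<and> c' \<le> rank_stat b \<phi> S A (\<lambda>i. ereal (y i))}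
      \<le> card {A. A \<subseteq> S \<and> card A = m \<and> c \<le> rank_stat b \<phi> S A (\<lambda>i. ereal (y i))}"
    using assms(2) by (intro card_mono) auto
  then show ?thesis
    unfolding G_fun_def by (intro divide_right_mono) auto
qed

text \<open>All \<open>u\<close> counted on the left lie weakly above the one with the smallest value of
  \<open>X\<close>, and there are at most \<open>\<alpha> |U|\<close> of those.\<close>

lemma card_small_upper_tail_le:
  fixes X :: "'u \<Rightarrow> real"
  assumes "finite U" "0 \<le> \<alpha>"
  shows "real (card {u\<in>U. real (card {v\<in>U. X u \<le> X v}) / real (card U) \<le> \<alpha>}) \<le> \<alpha> * real (card U)"
proof -
  define D where "D = {u\<in>U. real (card {v\<in>U. X u \<le> X v}) / real (card U) \<le> \<alpha>}"
  have "real (card D) \<le> \<alpha> * real (card U)"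
  proof (cases "D = {}")
    case True
    then show ?thesis using assms(2) by simp
  next
    case False
    moreover have "finite D" unfolding D_def using assms(1) by simp
    ultimately have "Min (X ` D) \<in> X ` D" by simp
    then obtain u0 where u0: "u0 \<in> D" "X u0 = Min (X ` D)" by auto
    have min: "X u0 \<le> X u" if "u \<in> D" for u
      using \<open>finite D\<close> that unfolding u0(2) by simp
    have "card D \<le> card {v\<in>U. X u0 \<le> X v}"
      using min assms(1) unfolding D_def by (intro card_mono) auto
    moreover have "real (card {v\<in>U. X u0 \<le> X v}) / real (card U) \<le> \<alpha>"
      using u0 unfolding D_def by simp
    moreover have "0 < card U"
      using u0 assms(1) unfolding D_def by (auto simp: card_gt_0_iff)
    ultimately show ?thesis
      by (simp add: pos_divide_le_eq)
  qed
  then show ?thesis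
    unfolding D_def .
qed

text \<open>The p-value that could be computed if the control outcomes \<^term>\<open>y\<close> of all units
  were known.\<close>

definition null_pval :: "bool \<Rightarrow> (nat \<Rightarrow> real) \<Rightarrow> (nat \<Rightarrow> real) \<Rightarrow> nat set \<Rightarrow> nat set \<Rightarrow> real" where
  "null_pval b \<phi> y S A = G_fun b \<phi> S (card A) y (rank_stat b \<phi> S A (\<lambda>i. ereal (y i)))"

lemma card_null_pval_le:
  assumes "finite S" "0 \<le> \<alpha>"
  shows "real (card {A. A \<subseteq> S \<and> card A = m \<and> null_pval b \<phi> y S A \<le> \<alpha>})
         \<le> \<alpha> * real (card {A. A \<subseteq> S \<and> card A = m})"
proof -
  define U where "U = {A. A \<subseteq> S \<and> card A = m}"
  define X where "X A = rank_stat b \<phi> S A (\<lambda>i. ereal (y i))" for A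
  have "finite U"
    unfolding U_def using assms(1) by simp
  have "null_pval b \<phi> y S A = real (card {B\<in>U. X A \<le> X B}) / real (card U)" if "A \<in> U" for A
  proof -
    have "{B. B \<subseteq> S \<and> card B = m \<and> X A \<le> X B} = {B\<in>U. X A \<le> X B}"
      unfolding U_def by auto
    then show ?thesis
      using that unfolding null_pval_def G_fun_def U_def X_def by simp
  qed
  then have "{A. A \<subseteq> S \<and> card A = m \<and> null_pval b \<phi> y S A \<le> \<alpha>}
      = {A\<in>U. real (card {B\<in>U. X A \<le> X B}) / real (card U) \<le> \<alpha>}"
    unfolding U_def by auto
  then show ?thesis
    using card_small_upper_tail_le[OF \<open>finite U\<close> assms(2), of X] unfolding U_def by simp
qed

section \<open>Exchangeability under missingness at random\<close>

definition outcomes :: "nat \<Rightarrow> nat \<Rightarrow> (nat set \<times> nat set \<times> nat set) set" where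
  "outcomes n n1 = {T. T \<subseteq> {..<n} \<and> card T = n1} \<times> Pow {..<n} \<times> Pow {..<n}"

definition miss_weight :: "nat \<Rightarrow> (bool \<Rightarrow> bool \<Rightarrow> real) \<Rightarrow> nat set \<times> nat set \<times> nat set \<Rightarrow> real" where
  "miss_weight n p = (\<lambda>(T, M1, M0). \<Prod>i<n. p (i \<in> M1) (i \<in> M0))"

lemma finite_outcomes: "finite (outcomes n n1)"
  unfolding outcomes_def by simp

lemma miss_weight_nonneg: "\<forall>m m'. 0 \<le> p m m' \<Longrightarrow> 0 \<le> miss_weight n p \<omega>"
  unfolding miss_weight_def by (auto intro: prod_nonneg split: prod.splits)

lemma prob_ev_eq_sum:
  "prob_ev n n1 p E =
     (\<Sum>(T, M1, M0)\<in>outcomes n n1. if E T M1 M0 then miss_weight n p (T, M1, M0) else 0)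
     / real (n choose n1)"
  unfolding prob_ev_def outcomes_def sum.cartesian_product[symmetric] sum_divide_distrib
  by (intro sum.cong refl) (simp add: miss_weight_def)

lemma sum_Pow_prod_mem:
  fixes f :: "bool \<Rightarrow> 'a \<Rightarrow> real"
  assumes "finite I"
  shows "(\<Sum>X\<in>Pow I. \<Prod>i\<in>I. f (i \<in> X) i) = (\<Prod>i\<in>I. f True i + f False i)"
proof -
  have "(\<Prod>i\<in>I. f (i \<in> X) i) = (\<Prod>i\<in>X. f True i) * (\<Prod>i\<in>I - X. f False i)" if "X \<subseteq> I" for X
    using prod.subset_diff[OF that assms, of "\<lambda>i. f (i \<in> X) i"] by (simp add: mult.commute)
  then show ?thesis
    using prod_add[OF assms, of "f True" "f False"] by simp
qed

lemma sum_miss_weight: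
  assumes "p True True + p True False + p False True + p False False = 1" "n1 \<le> n"
  shows "(\<Sum>\<omega>\<in>outcomes n n1. miss_weight n p \<omega>) = real (n choose n1)"
proof -
  have "(\<Sum>M1\<in>Pow {..<n}. \<Sum>M0\<in>Pow {..<n}. \<Prod>i<n. p (i \<in> M1) (i \<in> M0))
      = (\<Sum>M1\<in>Pow {..<n}. \<Prod>i<n. p (i \<in> M1) True + p (i \<in> M1) False)"
    using sum_Pow_prod_mem[of "{..<n}" "\<lambda>m i. p (i \<in> _) m"] by simp
  also have "\<dots> = 1"
    using sum_Pow_prod_mem[of "{..<n}" "\<lambda>m i. p m True + p m False"] assms(1)
    by (simp add: add.assoc)
  finally have "(\<Sum>M1\<in>Pow {..<n}. \<Sum>M0\<in>Pow {..<n}. \<Prod>i<n. p (i \<in> M1) (i \<in> M0)) = 1" .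
  moreover have "(\<Sum>\<omega>\<in>outcomes n n1. miss_weight n p \<omega>) = (\<Sum>T\<in>{T. T \<subseteq> {..<n} \<and> card T = n1}.
      \<Sum>M1\<in>Pow {..<n}. \<Sum>M0\<in>Pow {..<n}. \<Prod>i<n. p (i \<in> M1) (i \<in> M0))"
    unfolding outcomes_def miss_weight_def sum.cartesian_product[symmetric] ..
  ultimately show ?thesis
    using n_subsets[of "{..<n}" n1] by simp
qed

lemma prob_ev_mono:
  assumes "\<forall>m m'. 0 \<le> p m m'" "\<And>T M1 M0. E T M1 M0 \<Longrightarrow> E' T M1 M0"
  shows "prob_ev n n1 p E \<le> prob_ev n n1 p E'"
  unfolding prob_ev_eq_sum
  using miss_weight_nonneg[OF assms(1)] assms(2)
  by (intro divide_right_mono sum_mono) (auto split: prod.splits)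

lemma prob_ev_add_compl:
  assumes "p True True + p True False + p False True + p False False = 1" "n1 \<le> n"
  shows "prob_ev n n1 p E + prob_ev n n1 p (\<lambda>T M1 M0. \<not> E T M1 M0) = 1"
proof -
  have "prob_ev n n1 p E + prob_ev n n1 p (\<lambda>T M1 M0. \<not> E T M1 M0)
      = (\<Sum>\<omega>\<in>outcomes n n1. miss_weight n p \<omega>) / real (n choose n1)"
    unfolding prob_ev_eq_sum add_divide_distrib[symmetric] sum.distrib[symmetric]
    by (intro arg_cong[where f = "\<lambda>x. x / _"] sum.cong) auto
  then show ?thesis
    using sum_miss_weight[OF assms] assms(2) by simp
qed

definition obs_key :: "nat \<Rightarrow> nat set \<times> nat set \<times> nat set \<Rightarrow> nat set \<times> nat set" where
  "obs_key n = (\<lambda>(T, M1, M0). (obs n T M1 M0, obs n T M1 M0 \<inter> T))"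

definition key_weight :: "nat \<Rightarrow> nat \<Rightarrow> (bool \<Rightarrow> bool \<Rightarrow> real) \<Rightarrow> nat set \<Rightarrow> nat set \<Rightarrow> real" where
  "key_weight n n1 p s a = (\<Sum>\<omega>\<in>{\<omega>\<in>outcomes n n1. obs_key n \<omega> = (s, a)}. miss_weight n p \<omega>)"

definition perm_outcome :: "(nat \<Rightarrow> nat) \<Rightarrow> nat set \<times> nat set \<times> nat set \<Rightarrow> nat set \<times> nat set \<times> nat set" where
  "perm_outcome \<pi> = (\<lambda>(T, M1, M0). (\<pi> ` T, \<pi> ` M1, \<pi> ` M0))"

lemma obs_image:
  assumes "\<pi> permutes {..<n}"
  shows "obs n (\<pi> ` T) (\<pi> ` M1) (\<pi> ` M0) = \<pi> ` obs n T M1 M0"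
proof -
  have obs_eq: "obs n T M1 M0 = {..<n} \<inter> (T \<inter> M1 \<union> (M0 - T))" for T M1 M0
    unfolding obs_def by auto
  show ?thesis
    unfolding obs_eq using permutes_inj[OF assms] permutes_image[OF assms]
    by (simp add: image_Int image_Un image_set_diff)
qed

lemma perm_outcome_in_outcomes:
  assumes "\<pi> permutes {..<n}" "\<omega> \<in> outcomes n n1"
  shows "perm_outcome \<pi> \<omega> \<in> outcomes n n1"
  using assms permutes_in_image[OF assms(1)] card_image[OF inj_on_subset[OF permutes_inj[OF assms(1)]]]
  unfolding outcomes_def perm_outcome_def by (auto split: prod.splits)

lemma obs_key_perm_outcome:
  assumes "\<pi> permutes {..<n}"
  shows "obs_key n (perm_outcome \<pi> \<omega>) = map_prod (image \<pi>) (image \<pi>) (obs_key n \<omega>)"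
  unfolding obs_key_def perm_outcome_def
  using obs_image[OF assms] image_Int[OF permutes_inj[OF assms]] by (auto split: prod.splits)

lemma miss_weight_perm_outcome:
  assumes "\<pi> permutes {..<n}"
  shows "miss_weight n p (perm_outcome \<pi> \<omega>) = miss_weight n p \<omega>"
proof -
  obtain T M1 M0 where \<omega>: "\<omega> = (T, M1, M0)" by (cases \<omega>) auto
  have "(\<Prod>i<n. p (i \<in> \<pi> ` M1) (i \<in> \<pi> ` M0)) = (\<Prod>i<n. p (\<pi> i \<in> \<pi> ` M1) (\<pi> i \<in> \<pi> ` M0))"
    using prod.permute[OF assms] by (simp add: comp_def)
  then show ?thesis
    unfolding \<omega> miss_weight_def perm_outcome_def
    by (simp add: inj_image_mem_iff[OF permutes_inj[OF assms]])
qed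

lemma key_weight_perm:
  assumes "\<pi> permutes {..<n}"
  shows "key_weight n n1 p (\<pi> ` s) (\<pi> ` a) = key_weight n n1 p s a"
proof -
  have inv: "inv \<pi> permutes {..<n}"
    using permutes_inv[OF assms] .
  have cancel: "perm_outcome \<pi> (perm_outcome (inv \<pi>) \<omega>) = \<omega>"
    "perm_outcome (inv \<pi>) (perm_outcome \<pi> \<omega>) = \<omega>" for \<omega>
    unfolding perm_outcome_def
    using image_f_inv_f[OF permutes_surj[OF assms]] image_inv_f_f[OF permutes_inj[OF assms]]
    by (auto split: prod.splits)
  show ?thesis
    unfolding key_weight_def
    by (rule sum.reindex_bij_witness[where i = "perm_outcome \<pi>" and j = "perm_outcome (inv \<pi>)"])
      (use cancel perm_outcome_in_outcomes[OF assms] perm_outcome_in_outcomes[OF inv]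
        obs_key_perm_outcome[OF assms] obs_key_perm_outcome[OF inv] miss_weight_perm_outcome[OF inv]
        image_inv_f_f[OF permutes_inj[OF assms]] in auto)
qed

lemma permutes_exists_image:
  assumes "finite s" "a \<subseteq> s" "a' \<subseteq> s" "card a = card a'"
  obtains \<pi> where "\<pi> permutes s" "\<pi> ` a = a'"
proof -
  have "finite a" "finite a'"
    using assms(1-3) finite_subset by blast+
  then obtain f where f: "bij_betw f a a'"
    using finite_same_card_bij assms(4) by blast
  have "card (s - a) = card (s - a')"
    using assms \<open>finite a\<close> \<open>finite a'\<close> by (simp add: card_Diff_subset)
  then obtain g where g: "bij_betw g (s - a) (s - a')"
    using finite_same_card_bij assms(1) by blast
  define \<pi> where "\<pi> x = (if x \<in> a then f x else if x \<in> s then g x else x)" for x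
  have \<pi>a: "bij_betw \<pi> a a'"
    using f by (rule bij_betw_cong[THEN iffD1, rotated]) (simp add: \<pi>_def)
  have "bij_betw \<pi> (s - a) (s - a')"
    using g by (rule bij_betw_cong[THEN iffD1, rotated]) (simp add: \<pi>_def)
  with \<pi>a have "bij_betw \<pi> (a \<union> (s - a)) (a' \<union> (s - a'))"
    by (rule bij_betw_combine) auto
  moreover have "a \<union> (s - a) = s" "a' \<union> (s - a') = s"
    using assms(2,3) by auto
  ultimately have "bij_betw \<pi> s s" by simp
  then have "\<pi> permutes s"
    by (rule bij_imp_permutes) (use assms(2) in \<open>auto simp: \<pi>_def\<close>)
  moreover have "\<pi> ` a = a'"
    using \<pi>a by (simp add: bij_betw_def)
  ultimately show thesis ..
qed

lemma key_weight_card_eq: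
  assumes "s \<subseteq> {..<n}" "a \<subseteq> s" "a' \<subseteq> s" "card a = card a'"
  shows "key_weight n n1 p s a = key_weight n n1 p s a'"
proof -
  obtain \<pi> where \<pi>: "\<pi> permutes s" "\<pi> ` a = a'"
    using permutes_exists_image[OF finite_subset[OF assms(1)] assms(2-4)] by auto
  then have "\<pi> permutes {..<n}"
    using permutes_subset assms(1) by blast
  then have "key_weight n n1 p (\<pi> ` s) (\<pi> ` a) = key_weight n n1 p s a"
    by (rule key_weight_perm)
  then show ?thesis
    using \<pi> permutes_image by fastforce
qed

lemma sum_Pow_indicator_le:
  fixes V :: "nat set \<Rightarrow> real"
  assumes "finite s" and V_nonneg: "\<And>a. a \<subseteq> s \<Longrightarrow> 0 \<le> V a"
    and V_card: "\<And>a a'. a \<subseteq> s \<Longrightarrow> a' \<subseteq> s \<Longrightarrow> card a = card a' \<Longrightarrow> V a = V a'"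
    and F: "\<And>m. real (card {a. a \<subseteq> s \<and> card a = m \<and> F a}) \<le> \<alpha> * real (card {a. a \<subseteq> s \<and> card a = m})"
  shows "(\<Sum>a\<in>Pow s. if F a then V a else 0) \<le> \<alpha> * (\<Sum>a\<in>Pow s. V a)"
proof -
  have layer: "(\<Sum>a\<in>{a. a \<subseteq> s \<and> card a = m}. if F a then V a else 0)
      \<le> \<alpha> * (\<Sum>a\<in>{a. a \<subseteq> s \<and> card a = m}. V a)" for m
  proof (cases "{a. a \<subseteq> s \<and> card a = m} = {}")
    case True
    show ?thesis by (simp add: True)
  next
    case False
    then obtain a0 where a0: "a0 \<subseteq> s" "card a0 = m" by auto
    define v where "v = V a0"
    have V: "V a = v" if "a \<in> {a. a \<subseteq> s \<and> card a = m}" for a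
      unfolding v_def by (rule V_card) (use that a0 in auto)
    have "(\<Sum>a\<in>{a. a \<subseteq> s \<and> card a = m}. if F a then V a else 0)
        = v * real (card {a. a \<subseteq> s \<and> card a = m \<and> F a})"
      using \<open>finite s\<close> by (simp add: V sum.If_cases Int_def conj_commute conj_left_commute)
    also have "\<dots> \<le> v * (\<alpha> * real (card {a. a \<subseteq> s \<and> card a = m}))"
      using F V_nonneg[OF a0(1)] unfolding v_def by (rule mult_left_mono)
    also have "\<dots> = \<alpha> * (\<Sum>a\<in>{a. a \<subseteq> s \<and> card a = m}. V a)"
      by (simp add: V)
    finally show ?thesis .
  qed
  have "card ` Pow s \<subseteq> {..card s}"
    using \<open>finite s\<close> by (auto intro: card_mono)
  then have layers: "(\<Sum>a\<in>Pow s. g a) = (\<Sum>m\<le>card s. \<Sum>a\<in>{a. a \<subseteq> s \<and> card a = m}. g a)"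
    for g :: "nat set \<Rightarrow> real"
    using sum.group[of "Pow s" "{..card s}" card g] \<open>finite s\<close> by simp
  show ?thesis
    unfolding layers[of "\<lambda>a. if F a then V a else 0"] layers[of V]
    by (subst sum_distrib_left) (rule sum_mono[OF layer])
qed

lemma sum_outcomes_by_obs_key:
  "(\<Sum>\<omega>\<in>outcomes n n1. g (obs_key n \<omega>) * miss_weight n p \<omega>)
     = (\<Sum>s\<in>Pow {..<n}. \<Sum>a\<in>Pow s. g (s, a) * key_weight n n1 p s a)"
proof -
  have keys: "obs_key n ` outcomes n n1 \<subseteq> Sigma (Pow {..<n}) Pow"
    unfolding obs_key_def obs_def by auto
  have "finite (Sigma (Pow {..<n}) Pow)"
    by (auto intro: finite_subset[of _ "{..<n}"])
  then have "(\<Sum>\<omega>\<in>outcomes n n1. g (obs_key n \<omega>) * miss_weight n p \<omega>)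
      = (\<Sum>k\<in>Sigma (Pow {..<n}) Pow. \<Sum>\<omega>\<in>{\<omega>\<in>outcomes n n1. obs_key n \<omega> = k}.
           g (obs_key n \<omega>) * miss_weight n p \<omega>)"
    by (rule sum.group[OF finite_outcomes _ keys, symmetric])
  also have "\<dots> = (\<Sum>(s, a)\<in>Sigma (Pow {..<n}) Pow. g (s, a) * key_weight n n1 p s a)"
    unfolding key_weight_def sum_distrib_left by (intro sum.cong) auto
  also have "\<dots> = (\<Sum>s\<in>Pow {..<n}. \<Sum>a\<in>Pow s. g (s, a) * key_weight n n1 p s a)"
    by (rule sum.Sigma[symmetric]) (auto intro: finite_subset[of _ "{..<n}"])
  finally show ?thesis .
qed

text \<open>Missingness at random makes the units exchangeable: given the observed set \<open>S\<close>
  and \<open>n\<^sub>S\<^sub>1\<close>, the observed treated set is uniform among the subsets of \<open>S\<close> of that size.\<close>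

lemma prob_ev_obs_key_le:
  assumes p_nonneg: "\<forall>m m'. 0 \<le> p m m'"
    and p_sum: "p True True + p True False + p False True + p False False = 1"
    and "n1 \<le> n" "0 \<le> \<alpha>"
    and F: "\<And>s m. s \<subseteq> {..<n} \<Longrightarrow>
      real (card {a. a \<subseteq> s \<and> card a = m \<and> F s a}) \<le> \<alpha> * real (card {a. a \<subseteq> s \<and> card a = m})"
  shows "prob_ev n n1 p (\<lambda>T M1 M0. F (obs n T M1 M0) (obs n T M1 M0 \<inter> T)) \<le> \<alpha>"
proof -
  let ?W = "\<lambda>g. \<Sum>\<omega>\<in>outcomes n n1. g (obs_key n \<omega>) * miss_weight n p \<omega>"
  have "prob_ev n n1 p (\<lambda>T M1 M0. F (obs n T M1 M0) (obs n T M1 M0 \<inter> T))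
      = ?W (\<lambda>(s, a). if F s a then 1 else 0) / real (n choose n1)"
    unfolding prob_ev_eq_sum obs_key_def by (intro arg_cong[where f = "\<lambda>x. x / _"] sum.cong) auto
  also have "?W (\<lambda>(s, a). if F s a then 1 else 0) \<le> \<alpha> * ?W (\<lambda>_. 1)"
    unfolding sum_outcomes_by_obs_key[of "\<lambda>(s, a). if F s a then 1 else 0"]
      sum_outcomes_by_obs_key[of "\<lambda>_. 1"]
  proof (subst sum_distrib_left, intro sum_mono)
    fix s assume "s \<in> Pow {..<n}"
    then have s: "s \<subseteq> {..<n}" by simp
    have "(\<Sum>a\<in>Pow s. if F s a then key_weight n n1 p s a else 0) \<le> \<alpha> * (\<Sum>a\<in>Pow s. key_weight n n1 p s a)"
      by (rule sum_Pow_indicator_le[OF finite_subset[OF s finite_lessThan] _ key_weight_card_eq[OF s] F[OF s]])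
        (auto simp: key_weight_def intro!: sum_nonneg miss_weight_nonneg[OF p_nonneg])
    moreover have "(\<Sum>a\<in>Pow s. (if F s a then 1 else 0) * key_weight n n1 p s a)
        = (\<Sum>a\<in>Pow s. if F s a then key_weight n n1 p s a else 0)"
      by (intro sum.cong) auto
    ultimately show "(\<Sum>a\<in>Pow s. (case (s, a) of (s, a) \<Rightarrow> if F s a then 1 else 0) * key_weight n n1 p s a)
        \<le> \<alpha> * (\<Sum>a\<in>Pow s. 1 * key_weight n n1 p s a)"
      by (simp only: prod.case mult_1)
  qed
  also have "?W (\<lambda>_. 1) = real (n choose n1)"
    using sum_miss_weight[OF p_sum \<open>n1 \<le> n\<close>] by simp
  finally show ?thesis
    using \<open>n1 \<le> n\<close> by (simp add: divide_right_mono)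
qed

section \<open>Validity of the test and of the confidence sets\<close>

lemma finite_obs: "finite (obs n T M1 M0)"
  unfolding obs_def by simp

text \<open>In the application, \<^term>\<open>J\<close> is the set \<open>\<J>\<^sub>n\<^sub>S\<^sub>1\<^sub>-\<^sub>k\<close> of treated units moved to
  \<open>-\<infinity>\<close>, \<^term>\<open>B\<close> the treated units with \<open>\<tau>\<^sub>i > c\<close>, \<^term>\<open>Kv\<close> the keys of \<open>v\<close> and
  \<^term>\<open>Ks\<close> the keys of the control outcomes.\<close>

lemma count_le_dominated:
  fixes Kv Ks :: "nat \<Rightarrow> 'k::linorder"
  assumes "finite A" "J \<subseteq> A" "B \<subseteq> A" "card B \<le> card J"
    and low: "\<And>i j. j \<in> J \<Longrightarrow> i \<in> A \<Longrightarrow> Kv j \<le> Ks i"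
    and unmoved: "\<And>i. i \<in> A - J - B \<Longrightarrow> Kv i \<le> Ks i"
    and top: "\<And>i j. i \<in> J - B \<Longrightarrow> j \<in> A - J \<Longrightarrow> Kv j \<le> Ks i"
  shows "count_le A Ks x \<le> count_le A Kv x"
proof -
  define P where "P = {i\<in>A. Ks i \<le> x}"
  define Q where "Q = {i\<in>A. Kv i \<le> x}"
  have "finite Q" "finite B" "finite J"
    unfolding Q_def using assms(1-3) finite_subset by auto
  have "card P \<le> card Q"
  proof (cases "P = {}")
    case False
    then obtain i0 where "i0 \<in> A" "Ks i0 \<le> x" unfolding P_def by auto
    then have "J \<subseteq> Q"
      unfolding Q_def using low \<open>J \<subseteq> A\<close> by (auto intro: order_trans)
    show ?thesis
    proof (cases "\<exists>i\<in>J - B. Ks i \<le> x")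
      case True
      then have "Q = A"
        using top \<open>J \<subseteq> Q\<close> unfolding Q_def by (auto intro: order_trans)
      then show ?thesis
        unfolding P_def using \<open>finite A\<close> by (intro card_mono) auto
    next
      case False
      then have "P \<subseteq> (Q - J) \<union> B"
        unfolding P_def Q_def using unmoved by (auto intro: order_trans)
      then have "card P \<le> card (Q - J) + card B"
        using \<open>finite Q\<close> \<open>finite B\<close> card_Un_le[of "Q - J" B] by (meson card_mono finite_Diff finite_UnI le_trans)
      also have "\<dots> \<le> card (Q - J) + card J"
        using \<open>card B \<le> card J\<close> by simp
      also have "\<dots> = card Q"
        using card_Diff_subset[OF \<open>finite J\<close> \<open>J \<subseteq> Q\<close>] card_mono[OF \<open>finite Q\<close> \<open>J \<subseteq> Q\<close>] by simp
      finally show ?thesis .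
    qed
  qed simp
  then show ?thesis
    unfolding P_def Q_def count_le_def .
qed

lemma Jset_eq_count_le:
  "Jset n Y1 Y0 T M1 M0 k =
     {i\<in>obs n T M1 M0 \<inter> T. k < count_le (obs n T M1 M0 \<inter> T)
        (\<lambda>i. (ereal (yobs Y1 Y0 T i), i)) (ereal (yobs Y1 Y0 T i), i)}"
proof -
  have "psi i j (ereal (yobs Y1 Y0 T i)) (ereal (yobs Y1 Y0 T j)) = 1 \<longleftrightarrow>
      (ereal (yobs Y1 Y0 T j), j) \<le> (ereal (yobs Y1 Y0 T i), i)" for i j
    unfolding psi_def by auto
  then show ?thesis
    unfolding Jset_def count_le_def by simp
qed

lemma card_Jset: "card (Jset n Y1 Y0 T M1 M0 k) = nS1 n T M1 M0 - k"
  unfolding Jset_eq_count_le nS1_def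
  by (rule card_count_le_gt) (auto simp: finite_obs inj_on_def)

lemma count_le_Y0_le_vvec:
  assumes "Hto n Y1 Y0 T M1 M0 k c"
  shows "count_le (obs n T M1 M0 \<inter> T) (\<lambda>i. (ereal (Y0 i), i)) x
       \<le> count_le (obs n T M1 M0 \<inter> T) (\<lambda>i. (vvec n Y1 Y0 T M1 M0 k c i, i)) x"
proof -
  define A where "A = obs n T M1 M0 \<inter> T"
  define J where "J = Jset n Y1 Y0 T M1 M0 k"
  define B where "B = {i\<in>A. c < Y1 i - Y0 i}"
  define KY where "KY i = (ereal (yobs Y1 Y0 T i), i)" for i
  have "finite A"
    unfolding A_def using finite_obs by simp
  have J: "J = {i\<in>A. k < count_le A KY (KY i)}"
    unfolding J_def A_def KY_def by (rule Jset_eq_count_le)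
  then have "J \<subseteq> A" by auto
  have "card B \<le> card J"
    using assms(1) unfolding Hto_def J_def card_Jset B_def A_def by simp
  have vvec_A: "vvec n Y1 Y0 T M1 M0 k c i = ereal (Y1 i - c)" if "i \<in> A - J" for i
    using that unfolding vvec_def J_def[symmetric] yobs_def A_def by simp
  show ?thesis
    unfolding A_def[symmetric]
  proof (rule count_le_dominated[OF \<open>finite A\<close> \<open>J \<subseteq> A\<close> _ \<open>card B \<le> card J\<close>])
    show "B \<subseteq> A" unfolding B_def by auto
    show "(vvec n Y1 Y0 T M1 M0 k c j, j) \<le> (ereal (Y0 i), i)" if "j \<in> J" for i j
      using that unfolding vvec_def J_def by simp
    show "(vvec n Y1 Y0 T M1 M0 k c i, i) \<le> (ereal (Y0 i), i)" if "i \<in> A - J - B" for i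
      using that vvec_A[of i] unfolding B_def by auto
    show "(vvec n Y1 Y0 T M1 M0 k c j, j) \<le> (ereal (Y0 i), i)" if i: "i \<in> J - B" and j: "j \<in> A - J"
      for i j
    proof -
      have "count_le A KY (KY j) < count_le A KY (KY i)"
        using i j unfolding J by auto
      then have "KY j < KY i"
        using count_le_mono[OF \<open>finite A\<close>, of "KY i" "KY j" KY] by (meson leI not_le)
      moreover have "yobs Y1 Y0 T i = Y1 i" "yobs Y1 Y0 T j = Y1 j"
        using i j \<open>J \<subseteq> A\<close> unfolding yobs_def A_def by auto
      ultimately have "(ereal (Y1 j - c), j) \<le> (ereal (Y1 i - c), i)"
        unfolding KY_def by auto
      moreover have "Y1 i - c \<le> Y0 i"
        using i \<open>J \<subseteq> A\<close> unfolding B_def by auto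
      ultimately show ?thesis
        using vvec_A[OF j] by auto
    qed
  qed
qed

lemma rank_stat_vvec_le_imputed:
  assumes "mono \<phi>" "Hto n Y1 Y0 T M1 M0 k c"
  shows "rank_stat b \<phi> (obs n T M1 M0) (T \<inter> obs n T M1 M0) (vvec n Y1 Y0 T M1 M0 k c)
       \<le> rank_stat b \<phi> (obs n T M1 M0) (obs n T M1 M0 \<inter> T) (\<lambda>i. ereal (Y0 i))"
proof -
  define S where "S = obs n T M1 M0"
  define A where "A = S \<inter> T"
  have "finite S" "A \<subseteq> S"
    unfolding S_def A_def by (auto simp: finite_obs)
  have "key_stat b \<phi> S A (\<lambda>i. (vvec n Y1 Y0 T M1 M0 k c i, i)) \<le> key_stat b \<phi> S A (\<lambda>i. (ereal (Y0 i), i))"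
  proof (rule key_stat_mono[OF \<open>finite S\<close> \<open>A \<subseteq> S\<close> assms(1)])
    show "count_le A (\<lambda>i. (ereal (Y0 i), i)) x \<le> count_le A (\<lambda>i. (vvec n Y1 Y0 T M1 M0 k c i, i)) x" for x
      unfolding A_def S_def by (rule count_le_Y0_le_vvec[OF assms(2)])
    show "(vvec n Y1 Y0 T M1 M0 k c i, i) = (ereal (Y0 i), i)" if "i \<in> S - A" for i
      using that Jset_eq_count_le[of n Y1 Y0 T M1 M0 k] unfolding vvec_def yobs_def A_def S_def by auto
  qed (auto simp: inj_on_def)
  moreover have "S \<inter> (T \<inter> S) = A" "S \<inter> (S \<inter> T) = A" "S \<inter> A = A"
    unfolding A_def by auto
  ultimately show ?thesis
    unfolding S_def[symmetric] rank_stat_eq_key_stat[OF \<open>finite S\<close>] by simp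
qed

lemma null_pval_le_of_pval_le:
  assumes "mono \<phi>" "Hto n Y1 Y0 T M1 M0 k c" "pval b \<phi> y0 n Y1 Y0 T M1 M0 k c \<le> \<alpha>"
  shows "null_pval b \<phi> Y0 (obs n T M1 M0) (obs n T M1 M0 \<inter> T) \<le> \<alpha>"
proof -
  define S where "S = obs n T M1 M0"
  have "finite S"
    unfolding S_def by (rule finite_obs)
  have "null_pval b \<phi> Y0 S (S \<inter> T)
      \<le> G_fun b \<phi> S (card (S \<inter> T)) Y0 (rank_stat b \<phi> S (T \<inter> S) (vvec n Y1 Y0 T M1 M0 k c))"
    unfolding null_pval_def S_def
    by (intro G_fun_antimono rank_stat_vvec_le_imputed assms(1,2) finite_obs)
  also have "\<dots> = pval b \<phi> y0 n Y1 Y0 T M1 M0 k c"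
    unfolding pval_def nS1_def S_def[symmetric] by (rule G_fun_indep[OF \<open>finite S\<close>])
  finally show ?thesis
    using assms(3) unfolding S_def by simp
qed

lemma pval_mono:
  assumes "mono \<phi>" "c \<le> c'"
  shows "pval b \<phi> y0 n Y1 Y0 T M1 M0 k c \<le> pval b \<phi> y0 n Y1 Y0 T M1 M0 k c'"
proof -
  define S where "S = obs n T M1 M0"
  define A where "A = S \<inter> T"
  define K where "K d i = (vvec n Y1 Y0 T M1 M0 k d i, i)" for d i
  have "finite S" "finite A" "A \<subseteq> S"
    unfolding S_def A_def by (auto simp: finite_obs)
  have "K c' i \<le> K c i" for i
    unfolding K_def vvec_def using \<open>c \<le> c'\<close> by auto
  then have "count_le A (K c) x \<le> count_le A (K c') x" for x
    unfolding count_le_def using \<open>finite A\<close> by (intro card_mono) (auto intro: order_trans)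
  then have "key_stat b \<phi> S A (K c') \<le> key_stat b \<phi> S A (K c)"
    by (intro key_stat_mono[OF \<open>finite S\<close> \<open>A \<subseteq> S\<close> assms(1)])
      (auto simp: K_def vvec_def A_def inj_on_def)
  moreover have "S \<inter> (T \<inter> S) = A"
    unfolding A_def by auto
  ultimately have "rank_stat b \<phi> S (T \<inter> S) (vvec n Y1 Y0 T M1 M0 k c')
      \<le> rank_stat b \<phi> S (T \<inter> S) (vvec n Y1 Y0 T M1 M0 k c)"
    unfolding rank_stat_eq_key_stat[OF \<open>finite S\<close>] K_def by simp
  then show ?thesis
    unfolding pval_def S_def[symmetric] by (rule G_fun_antimono[OF \<open>finite S\<close>])
qed

lemma upward_closed_eq_ray:
  fixes I :: "real set"
  assumes up: "\<And>x y. x \<in> I \<Longrightarrow> x \<le> y \<Longrightarrow> y \<in> I"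
  shows "I = {c. Inf (ereal ` I) \<le> ereal c} \<or> I = {c. Inf (ereal ` I) < ereal c}"
proof (cases "Inf (ereal ` I) \<in> ereal ` I")
  case True
  then have "I = {c. Inf (ereal ` I) \<le> ereal c}"
    using up by (auto intro: Inf_lower)
  then show ?thesis ..
next
  case False
  have "I = {c. Inf (ereal ` I) < ereal c}"
  proof (intro equalityI subsetI)
    fix c assume "c \<in> I"
    then have "Inf (ereal ` I) \<le> ereal c" "Inf (ereal ` I) \<noteq> ereal c"
      using False by (auto intro: Inf_lower)
    then show "c \<in> {c. Inf (ereal ` I) < ereal c}"
      by simp
  next
    fix c assume "c \<in> {c. Inf (ereal ` I) < ereal c}"
    then obtain x where "x \<in> I" "ereal x < ereal c"
      by (auto simp: Inf_less_iff)
    then show "c \<in> I"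
      using up by simp
  qed
  then show ?thesis ..
qed

lemma length_filter_gt_sort_nth:
  fixes xs :: "'a::linorder list"
  assumes "1 \<le> k" "k \<le> length xs"
  shows "length (filter (\<lambda>x. sort xs ! (k - 1) < x) xs) \<le> length xs - k"
proof -
  define ys where "ys = sort xs"
  have "length (filter (\<lambda>x. ys ! (k - 1) < x) xs) = length (filter (\<lambda>x. ys ! (k - 1) < x) ys)"
    unfolding ys_def by (metis filter_sort length_sort)
  also have "\<dots> = card {i. i < length ys \<and> ys ! (k - 1) < ys ! i}"
    by (rule length_filter_conv_card)
  also have "\<dots> \<le> card {k..<length ys}"
  proof (rule card_mono)
    show "{i. i < length ys \<and> ys ! (k - 1) < ys ! i} \<subseteq> {k..<length ys}"
    proof
      fix i assume i: "i \<in> {i. i < length ys \<and> ys ! (k - 1) < ys ! i}"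
      have "\<not> i < k"
      proof
        assume "i < k"
        then have "ys ! i \<le> ys ! (k - 1)"
          using assms by (intro sorted_nth_mono) (auto simp: ys_def)
        with i show False by auto
      qed
      with i show "i \<in> {k..<length ys}" by simp
    qed
  qed simp
  finally show ?thesis
    unfolding ys_def by simp
qed

lemma Hto_tau_to:
  assumes "1 \<le> k" "k \<le> nS1 n T M1 M0"
  shows "Hto n Y1 Y0 T M1 M0 k (tau_to n Y1 Y0 T M1 M0 k)"
proof -
  define A where "A = obs n T M1 M0 \<inter> T"
  define xs where "xs = map (\<lambda>i. Y1 i - Y0 i) (sorted_list_of_set A)"
  have "finite A"
    unfolding A_def by (simp add: finite_obs)
  have "card {i\<in>A. t < Y1 i - Y0 i} = length (filter (\<lambda>x. t < x) xs)" for t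
  proof -
    have "length (filter (\<lambda>x. t < x) xs)
        = length (filter (\<lambda>i. t < Y1 i - Y0 i) (sorted_list_of_set A))"
      unfolding xs_def by (simp add: filter_map comp_def)
    also have "\<dots> = card {i\<in>A. t < Y1 i - Y0 i}"
      using \<open>finite A\<close> by (subst distinct_card[symmetric]) (auto intro!: arg_cong[where f = card])
    finally show ?thesis ..
  qed
  moreover have "length xs = nS1 n T M1 M0"
    unfolding xs_def nS1_def A_def by simp
  ultimately show ?thesis
    using length_filter_gt_sort_nth[of k xs] assms
    unfolding Hto_def tau_to_def xs_def[symmetric] A_def[symmetric] by simp
qed

lemma prob_ev_le_of_null_pval_le:
  assumes "\<forall>m m'. 0 \<le> p m m'"
    and "p True True + p True False + p False True + p False False = 1"
    and "n1 \<le> n" "0 < \<alpha>"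
    and "\<And>T M1 M0. E T M1 M0 \<Longrightarrow> null_pval b \<phi> y (obs n T M1 M0) (obs n T M1 M0 \<inter> T) \<le> \<alpha>"
  shows "prob_ev n n1 p E \<le> \<alpha>"
proof -
  have "prob_ev n n1 p E
      \<le> prob_ev n n1 p (\<lambda>T M1 M0. null_pval b \<phi> y (obs n T M1 M0) (obs n T M1 M0 \<inter> T) \<le> \<alpha>)"
    using prob_ev_mono[OF assms(1)] assms(5) .
  also have "\<dots> \<le> \<alpha>"
    by (rule prob_ev_obs_key_le[OF assms(1-3), where F = "\<lambda>s a. null_pval b \<phi> y s a \<le> \<alpha>"])
      (use assms(4) card_null_pval_le[OF finite_subset[OF _ finite_lessThan]] in auto)
  finally show ?thesis .
qed

lemma prob_ev_ge_of_null_pval_le: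
  assumes "\<forall>m m'. 0 \<le> p m m'"
    and "p True True + p True False + p False True + p False False = 1"
    and "n1 \<le> n" "0 < \<alpha>"
    and "\<And>T M1 M0. \<not> E T M1 M0 \<Longrightarrow> null_pval b \<phi> y (obs n T M1 M0) (obs n T M1 M0 \<inter> T) \<le> \<alpha>"
  shows "1 - \<alpha> \<le> prob_ev n n1 p E"
  using prob_ev_le_of_null_pval_le[where E = "\<lambda>T M1 M0. \<not> E T M1 M0", OF assms]
    prob_ev_add_compl[OF assms(2,3), of E] by linarith

lemma null_pval_le_of_tau_to_notin_CI:
  assumes "mono \<phi>" "1 \<le> k" "k \<le> nS1 n T M1 M0"
    and "tau_to n Y1 Y0 T M1 M0 k \<notin> CI b \<phi> y0 n Y1 Y0 \<alpha> T M1 M0 k"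
  shows "null_pval b \<phi> Y0 (obs n T M1 M0) (obs n T M1 M0 \<inter> T) \<le> \<alpha>"
  using null_pval_le_of_pval_le[OF assms(1) Hto_tau_to[OF assms(2,3)]] assms(4)
  by (simp add: CI_def not_less)

lemma CI_eq_ray:
  assumes "mono \<phi>"
  shows "let I = CI b \<phi> y0 n Y1 Y0 \<alpha> T M1 M0 k; t = Inf (ereal ` I) in
           I = {c. t \<le> ereal c} \<or> I = {c. t < ereal c}"
  unfolding Let_def
proof (rule upward_closed_eq_ray)
  fix c c' assume "c \<in> CI b \<phi> y0 n Y1 Y0 \<alpha> T M1 M0 k" "c \<le> c'"
  then have "\<alpha> < pval b \<phi> y0 n Y1 Y0 T M1 M0 k c"
    unfolding CI_def by simp
  also have "\<dots> \<le> pval b \<phi> y0 n Y1 Y0 T M1 M0 k c'"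
    using pval_mono[OF assms \<open>c \<le> c'\<close>] .
  finally show "c' \<in> CI b \<phi> y0 n Y1 Y0 \<alpha> T M1 M0 k"
    unfolding CI_def by simp
qed

theorem theorem10:
  fixes n n1 :: nat and p :: "bool \<Rightarrow> bool \<Rightarrow> real"
    and Y1 Y0 y0 :: "nat \<Rightarrow> real" and \<phi> :: "nat \<Rightarrow> real" and b :: bool
  assumes "1 \<le> n1" and "n1 < n"
    and "\<forall>m m'. 0 \<le> p m m'"
    and "p True True + p True False + p False True + p False False = 1"
    and "mono \<phi>"
  shows "(\<forall>k c \<alpha>. 1 \<le> k \<and> 0 < \<alpha> \<and> \<alpha> < 1 \<longrightarrow>
            prob_ev n n1 p (\<lambda>T M1 M0. k \<le> nS1 n T M1 M0
                \<and> pval b \<phi> y0 n Y1 Y0 T M1 M0 k c \<le> \<alpha>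
                \<and> Hto n Y1 Y0 T M1 M0 k c) \<le> \<alpha>)
       \<and> (\<forall>k \<alpha>. 1 \<le> k \<and> 0 < \<alpha> \<and> \<alpha> < 1 \<longrightarrow>
            prob_ev n n1 p (\<lambda>T M1 M0. k \<le> nS1 n T M1 M0 \<longrightarrow>
                tau_to n Y1 Y0 T M1 M0 k \<in> CI b \<phi> y0 n Y1 Y0 \<alpha> T M1 M0 k) \<ge> 1 - \<alpha>
          \<and> (\<forall>T M1 M0. T \<subseteq> {..<n} \<and> card T = n1 \<and> k \<le> nS1 n T M1 M0 \<longrightarrow>
                (let I = CI b \<phi> y0 n Y1 Y0 \<alpha> T M1 M0 k; t = Inf (ereal ` I) in
                  I = {c. t \<le> ereal c} \<or> I = {c. t < ereal c})))
       \<and> (\<forall>\<alpha>. 0 < \<alpha> \<and> \<alpha> < 1 \<longrightarrow>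
            prob_ev n n1 p (\<lambda>T M1 M0. \<forall>k. 1 \<le> k \<and> k \<le> nS1 n T M1 M0 \<longrightarrow>
                tau_to n Y1 Y0 T M1 M0 k \<in> CI b \<phi> y0 n Y1 Y0 \<alpha> T M1 M0 k) \<ge> 1 - \<alpha>)"
proof -
  have "n1 \<le> n"
    using assms(2) by simp
  note valid = prob_ev_le_of_null_pval_le[OF assms(3,4) this]
  note covers = prob_ev_ge_of_null_pval_le[OF assms(3,4) \<open>n1 \<le> n\<close>]
  show ?thesis
    apply (intro conjI allI impI)
    subgoal by (rule valid) (auto intro: null_pval_le_of_pval_le[OF assms(5)])
    subgoal by (rule covers) (auto intro: null_pval_le_of_tau_to_notin_CI[OF assms(5)])
    subgoal by (rule CI_eq_ray[OF assms(5)])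
    subgoal by (rule covers) (auto intro: null_pval_le_of_tau_to_notin_CI[OF assms(5)])
    done
qed

end
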